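(* For every integer $k>2$, $\mathcal{U}_k^m(\mathfrak{N})=\mathbb{N}_{\ge 2}$.
   Context: $\mathbb{N}$ denotes the non-negative integers and $\mathbb{N}_{\ge2}$ the set of integers greater than one. A numerical semigroup is a submonoid of $(\mathbb{N},+)$ with finite complement; $\mathfrak{N}$ denotes the set of all numerical semigroups (a monoid under intersection). A numerical semigroup is irreducible if it cannot be written as the intersection of two numerical semigroups properly containing it. Given a numerical semigroup $S$ and irreducible numerical semigroups $S_1,\dots,S_n$, the expression $S_1\cap\dots\cap S_n$ is a factorization of $S$ (of length $n$) if $S=S_1\cap\dots\cap S_n$ and $S\neq\bigcap_{j\in J}S_j$ for every nonempty proper subset $J\subsetneq\{1,\dots,n\}$. For a positive integer $k$, $\mathcal{U}_k^m(\mathfrak{N})$ is the set of positive integers $l$ such that there exists a numerical semigroup having a factorization of length $k$ and a factorization of length $l$. *)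

theory Defs
  imports Main
begin

definition numerical_semigroup :: "nat set \<Rightarrow> bool" where
  "numerical_semigroup S \<longleftrightarrow> 0 \<in> S \<and> (\<forall>x\<in>S. \<forall>y\<in>S. x + y \<in> S) \<and> finite (UNIV - S)"

definition irreducible_ns :: "nat set \<Rightarrow> bool" where
  "irreducible_ns S \<longleftrightarrow> numerical_semigroup S \<and>
     \<not> (\<exists>T1 T2. numerical_semigroup T1 \<and> numerical_semigroup T2 \<and>
                 S \<subset> T1 \<and> S \<subset> T2 \<and> S = T1 \<inter> T2)"

definition is_factorization :: "nat set \<Rightarrow> (nat \<Rightarrow> nat set) \<Rightarrow> nat \<Rightarrow> bool" where
  "is_factorization S F n \<longleftrightarrow> 0 < n \<and> (\<forall>i<n. irreducible_ns (F i)) \<and>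
     S = (\<Inter>i\<in>{..<n}. F i) \<and>
     (\<forall>J. J \<noteq> {} \<and> J \<subset> {..<n} \<longrightarrow> S \<noteq> (\<Inter>j\<in>J. F j))"

definition has_factorization_of_length :: "nat set \<Rightarrow> nat \<Rightarrow> bool" where
  "has_factorization_of_length S n \<longleftrightarrow> (\<exists>F. is_factorization S F n)"

definition U_m :: "nat \<Rightarrow> nat set" where
  "U_m k = {l. 0 < l \<and> (\<exists>S. numerical_semigroup S \<and>
        has_factorization_of_length S k \<and> has_factorization_of_length S l)}"

end

theory Submission
  imports Defs
begin

text \<open>
  A factorization of length \<open>n \<ge> 2\<close> writes \<open>S\<close> as the intersection of two proper
  oversemigroups (the first factor and the intersection of the others), so \<open>S\<close> is not
  irreducible and has no factorization of length 1. Conversely, let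
  \<open>S\<^sub>p = {0} \<union> [4p-1, 6p-2] \<union> [6p, \<infinity>)\<close>. For \<open>0 < j < p\<close> two irreducible
  semigroups with Frobenius number \<open>6p-1\<close> account for the gaps of \<open>S\<^sub>p\<close> below \<open>3p\<close>
  and in \<open>[4p-1-j, 4p-2]\<close>, and each remaining gap \<open>x \<in> [3p, 4p-2-j]\<close> is the Frobenius
  number of the irreducible semigroup \<open>{0} \<union> (x/2, \<infinity>) - {x}\<close>. Each of these
  \<open>p+1-j\<close> semigroups misses a point that all the others contain, so they form a
  factorization of \<open>S\<^sub>p\<close>, and \<open>S\<^sub>p\<close> has factorizations of every length from 2 to \<open>p\<close>.
\<close>

lemma numerical_semigroup_INT:
  assumes "finite I" "I \<noteq> {}" "\<And>i. i \<in> I \<Longrightarrow> numerical_semigroup (F i)"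
  shows "numerical_semigroup (\<Inter>i\<in>I. F i)"
proof -
  have "UNIV - (\<Inter>i\<in>I. F i) = (\<Union>i\<in>I. UNIV - F i)" by auto
  moreover have "finite (\<Union>i\<in>I. UNIV - F i)"
    using assms(1,3) unfolding numerical_semigroup_def by blast
  ultimately show ?thesis
    using assms(2,3) unfolding numerical_semigroup_def by auto
qed

text \<open>
  Every proper oversemigroup contains a gap \<open>g\<close> of \<open>S\<close>, hence \<open>f = g + (f - g)\<close> or
  \<open>f = g + g\<close>; so two proper oversemigroups cannot intersect in \<open>S\<close>.
\<close>
lemma irreducible_nsI:
  assumes ns: "numerical_semigroup S" and "f \<notin> S"
    and gaps: "\<And>g. g \<notin> S \<Longrightarrow> g \<noteq> f \<Longrightarrow> (g < f \<and> f - g \<in> S) \<or> 2 * g = f"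
  shows "irreducible_ns S"
proof -
  have "f \<in> T" if "numerical_semigroup T" "S \<subset> T" for T
  proof -
    obtain g where g: "g \<in> T" "g \<notin> S" using \<open>S \<subset> T\<close> by blast
    have add: "x + y \<in> T" if "x \<in> T" "y \<in> T" for x y
      using \<open>numerical_semigroup T\<close> that unfolding numerical_semigroup_def by blast
    consider "g = f" | "g < f" "f - g \<in> S" | "2 * g = f" using gaps g(2) by blast
    then show ?thesis
    proof cases
      case 2
      with \<open>S \<subset> T\<close> add[OF _ g(1), of "f - g"] show ?thesis by auto
    next
      case 3
      with add[OF g(1) g(1)] show ?thesis by (simp add: mult_2)
    qed (use g in simp)
  qed
  with ns \<open>f \<notin> S\<close> show ?thesis unfolding irreducible_ns_def by blast
qed

lemma irreducible_nsD:
  assumes "irreducible_ns S" "numerical_semigroup T1" "numerical_semigroup T2" "S = T1 \<inter> T2"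
  shows "S = T1 \<or> S = T2"
  using assms unfolding irreducible_ns_def by blast

lemma is_factorization_one_irreducible:
  assumes "is_factorization S F 1"
  shows "irreducible_ns S"
  using assms unfolding is_factorization_def by (simp add: lessThan_Suc)

lemma is_factorization_not_irreducible:
  assumes fac: "is_factorization S F n" and "2 \<le> n"
  shows "\<not> irreducible_ns S"
proof
  assume irr: "irreducible_ns S"
  have ns: "numerical_semigroup (F i)" if "i < n" for i
    using fac that unfolding is_factorization_def irreducible_ns_def by blast
  have S: "S = (\<Inter>i\<in>{..<n}. F i)"
    and minimal: "\<And>J. J \<noteq> {} \<Longrightarrow> J \<subset> {..<n} \<Longrightarrow> S \<noteq> (\<Inter>j\<in>J. F j)"
    using fac unfolding is_factorization_def by blast+
  define R where "R = (\<Inter>i\<in>{1..<n}. F i)"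
  have "{..<n} = insert 0 {1..<n}" using \<open>2 \<le> n\<close> by auto
  then have split: "S = F 0 \<inter> R" unfolding S R_def by simp
  have "1 \<in> {..<n}" using \<open>2 \<le> n\<close> by simp
  then have "{0} \<subset> {..<n}" by auto
  have "1 \<in> {1..<n}" "0 \<in> {..<n}" "0 \<notin> {1..<n}" "{1..<n} \<subseteq> {..<n}"
    using \<open>2 \<le> n\<close> by auto
  then have "{1..<n} \<noteq> {}" "{1..<n} \<subset> {..<n}" by blast+
  with \<open>{0} \<subset> {..<n}\<close> have "S \<noteq> F 0" "S \<noteq> R"
    using minimal[of "{0}"] minimal[of "{1..<n}"] unfolding R_def by auto
  moreover have "numerical_semigroup R"
    unfolding R_def using \<open>2 \<le> n\<close> ns by (intro numerical_semigroup_INT) auto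
  ultimately show False
    using irreducible_nsD[OF irr ns[of 0] _ split] \<open>2 \<le> n\<close> by auto
qed

lemma is_factorizationI:
  assumes "0 < n" "\<And>i. i < n \<Longrightarrow> irreducible_ns (F i)" "S = (\<Inter>i\<in>{..<n}. F i)"
    and separating: "\<And>i. i < n \<Longrightarrow> \<exists>w. w \<notin> F i \<and> (\<forall>j<n. j \<noteq> i \<longrightarrow> w \<in> F j)"
  shows "is_factorization S F n"
  unfolding is_factorization_def
proof (intro conjI allI impI)
  fix J assume J: "J \<noteq> {} \<and> J \<subset> {..<n}"
  then obtain i where i: "i < n" "i \<notin> J" by blast
  with separating obtain w where "w \<notin> F i" "\<forall>j<n. j \<noteq> i \<longrightarrow> w \<in> F j" by blast
  with J i assms(3) have "w \<in> (\<Inter>j\<in>J. F j)" "w \<notin> S" by auto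
  then show "S \<noteq> (\<Inter>j\<in>J. F j)" by blast
qed (use assms in auto)

lemma U_m_subset:
  assumes "2 \<le> k"
  shows "U_m k \<subseteq> {l. 2 \<le> l}"
proof
  fix l assume "l \<in> U_m k"
  then obtain S F G where "0 < l" "is_factorization S F k" "is_factorization S G l"
    unfolding U_m_def has_factorization_of_length_def by blast
  with assms have "l \<noteq> 1"
    using is_factorization_one_irreducible is_factorization_not_irreducible by blast
  with \<open>0 < l\<close> show "l \<in> {l. 2 \<le> l}" by simp
qed

definition upper_half_semigroup :: "nat \<Rightarrow> nat set" where
  "upper_half_semigroup f = {x. x = 0 \<or> (f div 2 < x \<and> x \<noteq> f)}"

lemma irreducible_upper_half_semigroup:
  assumes "1 \<le> f"
  shows "irreducible_ns (upper_half_semigroup f)"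
proof (rule irreducible_nsI[where f = f])
  have "UNIV - upper_half_semigroup f \<subseteq> {..f}" unfolding upper_half_semigroup_def by auto
  then show "numerical_semigroup (upper_half_semigroup f)"
    unfolding numerical_semigroup_def upper_half_semigroup_def
    by (auto intro: finite_subset)
qed (use assms in \<open>auto simp: upper_half_semigroup_def\<close>)

text \<open>
  The gaps in \<open>[3p, 6p-2]\<close> are the mirror images \<open>6p-1-x\<close> of the elements \<open>x\<close>
  in \<open>(2p, 2p+j]\<close>, which makes the semigroup irreducible with Frobenius number \<open>6p-1\<close>.
\<close>
definition outer_factor :: "nat \<Rightarrow> nat \<Rightarrow> nat set" where
  "outer_factor p j = {x. x = 0 \<or> (2*p < x \<and> x \<le> 2*p + j) \<or>
      (3*p \<le> x \<and> x \<le> 6*p - 2 \<and> \<not> (2*p < 6*p - 1 - x \<and> 6*p - 1 - x \<le> 2*p + j)) \<or>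
      6*p \<le> x}"

lemma irreducible_outer_factor:
  assumes "j < p"
  shows "irreducible_ns (outer_factor p j)"
proof (rule irreducible_nsI[where f = "6*p - 1"])
  have "UNIV - outer_factor p j \<subseteq> {..6*p}" unfolding outer_factor_def by auto
  then show "numerical_semigroup (outer_factor p j)"
    using assms unfolding numerical_semigroup_def outer_factor_def
    by (auto intro: finite_subset)
qed (use assms in \<open>auto simp: outer_factor_def\<close>)

definition many_lengths_semigroup :: "nat \<Rightarrow> nat set" where
  "many_lengths_semigroup p = {x. x = 0 \<or> (4*p - 1 \<le> x \<and> x \<le> 6*p - 2) \<or> 6*p \<le> x}"

lemma numerical_semigroup_many_lengths_semigroup:
  "numerical_semigroup (many_lengths_semigroup p)"
proof -
  have "UNIV - many_lengths_semigroup p \<subseteq> {..6*p}" unfolding many_lengths_semigroup_def by auto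
  then show ?thesis
    unfolding numerical_semigroup_def many_lengths_semigroup_def by (auto intro: finite_subset)
qed

definition many_lengths_factor :: "nat \<Rightarrow> nat \<Rightarrow> nat \<Rightarrow> nat set" where
  "many_lengths_factor p j i =
     (if i = 0 then outer_factor p 0 else if i = 1 then outer_factor p j
      else upper_half_semigroup (4*p - j - i))"

lemma many_lengths_semigroup_eq_INT_factors:
  assumes "1 \<le> j" "j < p"
  shows "many_lengths_semigroup p = (\<Inter>i\<in>{..<p + 1 - j}. many_lengths_factor p j i)"
proof (intro equalityI subsetI)
  fix x assume "x \<in> many_lengths_semigroup p"
  with assms show "x \<in> (\<Inter>i\<in>{..<p + 1 - j}. many_lengths_factor p j i)"
    unfolding many_lengths_semigroup_def many_lengths_factor_def outer_factor_def
      upper_half_semigroup_def by auto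
next
  fix x assume x: "x \<in> (\<Inter>i\<in>{..<p + 1 - j}. many_lengths_factor p j i)"
  show "x \<in> many_lengths_semigroup p"
  proof (rule ccontr)
    assume "x \<notin> many_lengths_semigroup p"
    moreover have "x \<in> many_lengths_factor p j 0" using x assms by auto
    ultimately have gap: "3*p \<le> x" "x \<le> 4*p - 2"
      unfolding many_lengths_factor_def outer_factor_def many_lengths_semigroup_def by auto
    show False
    proof (cases "6*p - 1 - x \<le> 2*p + j")
      case True
      moreover have "x \<in> many_lengths_factor p j 1" using x assms by auto
      ultimately show False
        using gap assms unfolding many_lengths_factor_def outer_factor_def by auto
    next
      case False
      define i where "i = 4*p - j - x"
      have "2 \<le> i" "i < p + 1 - j" "4*p - j - i = x"
        using False gap assms unfolding i_def by auto
      moreover have "x \<in> many_lengths_factor p j i" using x \<open>i < p + 1 - j\<close> by auto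
      ultimately show False unfolding many_lengths_factor_def upper_half_semigroup_def by auto
    qed
  qed
qed

lemma many_lengths_factor_separated:
  assumes "1 \<le> j" "j < p" "i < p + 1 - j"
  shows "\<exists>w. w \<notin> many_lengths_factor p j i \<and>
               (\<forall>i'<p + 1 - j. i' \<noteq> i \<longrightarrow> w \<in> many_lengths_factor p j i')"
proof -
  note defs = many_lengths_factor_def outer_factor_def upper_half_semigroup_def
  consider "i = 0" | "i = 1" | "2 \<le> i" by linarith
  then show ?thesis
  proof cases
    case 1
    then show ?thesis using assms
      by (intro exI[of _ "2*p + 1"]) (auto simp: defs)
  next
    case 2
    then show ?thesis using assms
      by (intro exI[of _ "4*p - 2"]) (auto simp: defs)
  next
    case 3
    then show ?thesis using assms
      by (intro exI[of _ "4*p - j - i"]) (auto simp: defs)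
  qed
qed

lemma many_lengths_semigroup_has_factorization:
  assumes "2 \<le> L" "L \<le> p"
  shows "has_factorization_of_length (many_lengths_semigroup p) L"
proof -
  define j where "j = p + 1 - L"
  have j: "1 \<le> j" "j < p" and L: "L = p + 1 - j" using assms unfolding j_def by auto
  have "irreducible_ns (many_lengths_factor p j i)" if "i < L" for i
    using that j L irreducible_outer_factor irreducible_upper_half_semigroup
    unfolding many_lengths_factor_def by auto
  moreover have "many_lengths_semigroup p = (\<Inter>i\<in>{..<L}. many_lengths_factor p j i)"
    using many_lengths_semigroup_eq_INT_factors[OF j] L by simp
  ultimately have "is_factorization (many_lengths_semigroup p) (many_lengths_factor p j) L"
    using assms many_lengths_factor_separated[OF j] unfolding L by (intro is_factorizationI) auto
  then show ?thesis unfolding has_factorization_of_length_def by blast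
qed

theorem theorem2p5:
  fixes k :: nat
  assumes "k > 2"
  shows "U_m k = {l. l \<ge> 2}"
proof
  show "U_m k \<subseteq> {l. l \<ge> 2}" using assms U_m_subset by simp
  show "{l. l \<ge> 2} \<subseteq> U_m k"
  proof
    fix l :: nat assume "l \<in> {l. l \<ge> 2}"
    then have "has_factorization_of_length (many_lengths_semigroup (max k l)) L"
      if "L \<in> {k, l}" for L
      using that assms by (intro many_lengths_semigroup_has_factorization) auto
    with \<open>l \<in> {l. l \<ge> 2}\<close> show "l \<in> U_m k"
      using numerical_semigroup_many_lengths_semigroup unfolding U_m_def by auto
  qed
qed

end
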